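(* There is an absolute constant $C>0$ such that the following holds for every $n\ge2$. Let $v_i:=i$ for $i=1,\dots,n$. Then there exist $s_1,\dots,s_n\in[0,1)$ such that for every $t\in\mathbb{R}$, every $\gamma\in[0,1]$ and every sector $S$ of aperture $\gamma$, $$\big|N_S(s_1+v_1t,\dots,s_n+v_nt)-\gamma n\big|\ \le\ C\big(\sqrt{n\gamma\log n}+\log n\big).$$ Consequently $B(s_1+v_1t,\dots,s_n+v_nt)\le C'\sqrt{n\log n}$ for all $t\in\mathbb{R}$, for an absolute constant $C'$.
   Context: For $r\in\mathbb{R}$, $\{r\}:=r-\lfloor r\rfloor$. A sector of aperture $\gamma\in[0,1]$ is a set $S_{\alpha,\alpha+\gamma}:=\{x\in[0,1]:\{x-\alpha\}\le\gamma\}$ with $\alpha\in\mathbb{R}$. $N_S(x_1,\dots,x_n):=|\{i:\{x_i\}\in S\}|$. The bias is $B(r_1,\dots,r_n):=\sup_{0\le a\le b\le1}\big|\,|\{i:\{r_i\}\in[a,b]\}|-n(b-a)\big|$. $\log$ is base 2. *)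

theory Defs
  imports Complex_Main
begin

definition sector :: "real \<Rightarrow> real \<Rightarrow> real set" where
  "sector \<alpha> \<gamma> = {x \<in> {0..1}. frac (x - \<alpha>) \<le> \<gamma>}"

definition N_count :: "real set \<Rightarrow> nat \<Rightarrow> (nat \<Rightarrow> real) \<Rightarrow> nat" where
  "N_count S n x = card {i \<in> {1..n}. frac (x i) \<in> S}"

definition bias :: "nat \<Rightarrow> (nat \<Rightarrow> real) \<Rightarrow> real" where
  "bias n r = Sup {\<bar>real (card {i \<in> {1..n}. frac (r i) \<in> {a..b}}) - real n * (b - a)\<bar>
                   | a b. 0 \<le> a \<and> a \<le> b \<and> b \<le> 1}"

end

theory Submission
  imports Defs "HOL-Library.FuncSet"
begin

(* Take the starting points on the grid of mesh 1/n^2, s_i = g_i / M with M = n^2. Scaled by M, the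
   point s_i + i t - alpha differs from the integer g_i + i floor(M t) - floor(M alpha) by
   i frac(M t) - frac(M alpha), which lies in (-1, n]. Hence every sector count is squeezed between
   two counts of the i with (g_i + i J - A) mod M in a window {0..l} whose length l + 1 is within
   n + 2 of M gamma, and these window counts depend only on J mod M, A mod M and l < M: n^6 windows
   in all. For g uniform in {0..M-1}^n a window count is a sum of n independent indicators of
   mean (l+1)/M, so by a Chernoff bound it is 16 (sqrt(a log n) + log n) away from its mean a for at
   most a 2/n^8 fraction of the g; a union bound over the windows leaves a good g. An interval [a,b]
   is the sector of aperture b - a at a up to the single point 0, which gives the bias bound. *)

lemma frac_add_nonneg_le:
  fixes v w :: real
  assumes "0 \<le> w"
  shows "frac (v + w) \<le> frac v + w"
proof -
  have "frac w \<le> w"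
    using assms by (simp add: frac_def)
  moreover have "frac (v + w) \<le> frac v + frac w"
    by (simp add: frac_add)
  ultimately show ?thesis by linarith
qed

lemma frac_of_int_div:
  assumes "0 < M"
  shows "frac (of_int z / real M) = of_int (z mod int M) / real M"
proof -
  have "real_of_int (z - z mod int M) = real M * of_int (z div int M)"
    by (simp only: minus_mod_eq_mult_div of_int_mult of_int_of_nat_eq)
  then have "of_int z / real M - of_int (z mod int M) / real M = of_int (z div int M)"
    using assms by (simp add: field_simps flip: of_int_diff)
  moreover have "z mod int M < int M"
    using assms by simp
  then have "real_of_int (z mod int M) < real M"
    by linarith
  ultimately show ?thesis
    using assms by (simp add: frac_unique_iff)
qed

lemma exp_le_one_plus_x_plus_sq:
  fixes x :: real
  assumes "\<bar>x\<bar> \<le> 1"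
  shows "exp x \<le> 1 + x + x\<^sup>2"
proof (cases "0 \<le> x")
  case True
  then show ?thesis
    using assms exp_bound by simp
next
  case False
  have "0 \<le> (x + 1/2)\<^sup>2 + 3/4"
    by simp
  then have q: "0 \<le> 1 + x + x\<^sup>2"
    by (simp add: power2_eq_square algebra_simps)
  have "1 \<le> 1 - x ^ 3"
    using False by (simp add: power3_eq_cube mult_nonpos_nonneg mult_nonneg_nonpos zero_le_mult_iff)
  also have "\<dots> = (1 - x) * (1 + x + x\<^sup>2)"
    by (simp add: algebra_simps power2_eq_square power3_eq_cube)
  also have "\<dots> \<le> exp (-x) * (1 + x + x\<^sup>2)"
    using exp_ge_add_one_self[of "-x"] q by (intro mult_right_mono) auto
  finally show ?thesis
    by (simp add: exp_minus field_simps)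
qed

lemma exp_neg_log2_le:
  fixes x :: real
  assumes "1 \<le> x"
  shows "exp (- (real k * log 2 x)) \<le> 1 / x ^ k"
proof -
  have "ln x / 1 \<le> ln x / ln 2"
    using assms ln_2_less_1 by (intro divide_left_mono) auto
  then have "ln x \<le> log 2 x"
    by (simp add: log_def)
  then have "exp (- (real k * log 2 x)) \<le> exp (- (real k * ln x))"
    by (simp add: mult_left_mono)
  also have "\<dots> = 1 / x ^ k"
    using assms by (simp add: exp_minus exp_of_nat_mult inverse_eq_divide)
  finally show ?thesis .
qed

lemma sqrt_le_sqrt_add:
  fixes a c d :: real
  assumes "0 \<le> c" "a \<le> c + d" "1 \<le> d"
  shows "sqrt a \<le> sqrt c + d"
proof -
  have "sqrt a \<le> sqrt (c + d)"
    using assms(2) by simp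
  also have "\<dots> \<le> sqrt c + sqrt d"
    using assms by (intro sqrt_add_le_add_sqrt) auto
  also have "sqrt d \<le> d"
    using assms(3) by (intro real_le_lsqrt) (auto simp: power2_eq_square)
  finally show ?thesis
    by simp
qed

lemma card_PiE_exp_tail:
  fixes f :: "'a \<Rightarrow> 'b \<Rightarrow> real"
  assumes "finite I" "\<And>i. i \<in> I \<Longrightarrow> finite (B i)"
  shows "real (card {g \<in> PiE I B. T \<le> \<mu> * (\<Sum>i\<in>I. f i (g i))})
           \<le> exp (-T) * (\<Prod>i\<in>I. \<Sum>y\<in>B i. exp (\<mu> * f i y))"
proof -
  let ?S = "{g \<in> PiE I B. T \<le> \<mu> * (\<Sum>i\<in>I. f i (g i))}"
  have fin: "finite (PiE I B)"
    using assms by (simp add: finite_PiE)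
  have "real (card ?S) \<le> (\<Sum>g\<in>?S. exp (\<mu> * (\<Sum>i\<in>I. f i (g i)) - T))"
    using sum_mono[of ?S "\<lambda>_. 1::real" "\<lambda>g. exp (\<mu> * (\<Sum>i\<in>I. f i (g i)) - T)"] by simp
  also have "\<dots> \<le> (\<Sum>g\<in>PiE I B. exp (\<mu> * (\<Sum>i\<in>I. f i (g i)) - T))"
    using fin by (intro sum_mono2) auto
  also have "\<dots> = (\<Sum>g\<in>PiE I B. exp (-T) * (\<Prod>i\<in>I. exp (\<mu> * f i (g i))))"
    by (intro sum.cong refl) (simp add: exp_diff exp_minus exp_sum[OF assms(1)] sum_distrib_left field_simps)
  also have "\<dots> = exp (-T) * (\<Sum>g\<in>PiE I B. \<Prod>i\<in>I. exp (\<mu> * f i (g i)))"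
    by (simp add: sum_distrib_left)
  also have "(\<Sum>g\<in>PiE I B. \<Prod>i\<in>I. exp (\<mu> * f i (g i))) = (\<Prod>i\<in>I. \<Sum>y\<in>B i. exp (\<mu> * f i y))"
    using assms by (intro prod_sum_PiE [symmetric]) auto
  finally show ?thesis .
qed

lemma exists_not_in_small_union:
  assumes "finite T" "\<And>x. x \<in> T \<Longrightarrow> B x \<subseteq> \<Omega>"
    and "\<And>x. x \<in> T \<Longrightarrow> real (card (B x)) \<le> b" "real (card T) * b < real (card \<Omega>)"
  shows "\<exists>\<omega>\<in>\<Omega>. \<forall>x\<in>T. \<omega> \<notin> B x"
proof -
  have "real (card (\<Union> (B ` T))) \<le> (\<Sum>x\<in>T. real (card (B x)))"
    using card_UN_le[OF assms(1), of B] by (simp flip: of_nat_sum)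
  also have "\<dots> \<le> real (card T) * b"
    using sum_mono[of T "\<lambda>x. real (card (B x))" "\<lambda>_. b"] assms(3) by simp
  finally have "card (\<Union> (B ` T)) < card \<Omega>"
    using assms(4) by linarith
  then have "\<Union> (B ` T) \<noteq> \<Omega>"
    by auto
  moreover have "\<Union> (B ` T) \<subseteq> \<Omega>"
    using assms(2) by blast
  ultimately show ?thesis
    by blast
qed

lemma exists_chernoff_parameter:
  fixes a L :: real
  assumes "0 \<le> a" "1 \<le> L"
  shows "\<exists>k. 0 \<le> k \<and> k \<le> 1 \<and> a * k\<^sup>2 - k * (16 * (sqrt (a * L) + L)) \<le> -8 * L"
proof (cases "16 * (sqrt (a * L) + L) \<le> 2 * a")
  case True
  \<comment> \<open>\<open>k = D / (2 a)\<close> minimises \<open>a k\<^sup>2 - k D\<close>.\<close>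
  define D where "D = 16 * (sqrt (a * L) + L)"
  have "0 < D"
    using assms by (simp add: D_def add_nonneg_pos)
  then have "0 < a"
    using True D_def by linarith
  have "16 * sqrt (a * L) \<le> D" "0 \<le> a * L"
    using assms by (simp_all add: D_def)
  then have D2: "256 * (a * L) \<le> D\<^sup>2"
    using power_mono[of "16 * sqrt (a * L)" D 2] by (simp add: power_mult_distrib)
  have "a * (D / (2 * a))\<^sup>2 - D / (2 * a) * D = - D\<^sup>2 / (4 * a)"
    using \<open>0 < a\<close> by (simp add: field_simps power2_eq_square)
  also have "\<dots> \<le> - (256 * (a * L)) / (4 * a)"
    using D2 \<open>0 < a\<close> by (intro divide_right_mono) auto
  also have "\<dots> \<le> -8 * L"
    using \<open>0 < a\<close> assms by simp
  finally show ?thesis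
    using True \<open>0 < a\<close> \<open>0 < D\<close> unfolding D_def[symmetric]
    by (intro exI[of _ "D / (2 * a)"]) auto
next
  case False
  have "0 \<le> sqrt (a * L)"
    using assms by simp
  then have "a - 16 * (sqrt (a * L) + L) \<le> -8 * L"
    using False by argo
  then show ?thesis
    by (intro exI[of _ 1]) simp
qed

section \<open>Residue windows\<close>

(* (g i + i J - A) mod M <= l says that g_i/M + i J/M - A/M lies in [0, (l+1)/M) modulo 1. *)
definition window_count :: "nat \<Rightarrow> nat \<Rightarrow> (nat \<Rightarrow> nat) \<Rightarrow> int \<Rightarrow> int \<Rightarrow> nat \<Rightarrow> nat" where
  "window_count n M g J A l = card {i \<in> {1..n}. (int (g i) + int i * J - A) mod int M \<le> int l}"

lemma window_count_mod:
  "window_count n M g (J mod int M) (A mod int M) l = window_count n M g J A l"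
proof -
  have "(x + i * (J mod int M) - A mod int M) mod int M = (x + i * J - A) mod int M" for x i :: int
    by (simp add: mod_simps) (metis mod_add_cong mod_diff_cong mod_mult_right_eq)
  then show ?thesis
    by (simp add: window_count_def)
qed

lemma sum_exp_residue_window:
  assumes "l < M"
  shows "(\<Sum>x<M. exp (\<mu> * of_bool ((int x + c) mod int M \<le> int l)))
           = real (l + 1) * exp \<mu> + real (M - (l + 1))"
proof -
  let ?h = "\<lambda>x. nat ((int x + c) mod int M)"
  have "bij_betw ?h {..<M} {..<M}"
    by (rule bij_betwI[of _ _ _ "\<lambda>y. nat ((int y - c) mod int M)"])
       (use assms in \<open>auto simp: nat_less_iff mod_simps\<close>)
  then have "(\<Sum>x<M. exp (\<mu> * of_bool (?h x \<le> l))) = (\<Sum>y<M. exp (\<mu> * of_bool (y \<le> l)))"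
    by (rule sum.reindex_bij_betw)
  also have "\<dots> = (\<Sum>y\<in>{..l}. exp \<mu>) + (\<Sum>y\<in>{l<..<M}. 1)"
  proof -
    have "{..<M} = {..l} \<union> {l<..<M}" "{..l} \<inter> {l<..<M} = {}"
      using assms by auto
    then show ?thesis
      by (simp add: sum.union_disjoint)
  qed
  also have "\<dots> = real (l + 1) * exp \<mu> + real (M - (l + 1))"
    by simp
  finally show ?thesis
    using assms by (simp add: nat_le_iff)
qed

lemma window_count_exp_tail:
  assumes "l < M"
  shows "real (card {g \<in> PiE {1..n} (\<lambda>_. {..<M}). T \<le> \<mu> * real (window_count n M g J A l)})
           \<le> exp (-T) * real M ^ n * exp (real n * real (l + 1) / real M * (exp \<mu> - 1))"
proof -
  define p where "p = real (l + 1) / real M"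
  define f :: "nat \<Rightarrow> nat \<Rightarrow> real"
    where "f i y = of_bool ((int y + (int i * J - A)) mod int M \<le> int l)" for i y
  have count: "real (window_count n M g J A l) = (\<Sum>i\<in>{1..n}. f i (g i))" for g
    by (simp add: window_count_def f_def Int_def algebra_simps conj_commute)
  have factor: "(\<Sum>y<M. exp (\<mu> * f i y)) \<le> real M * exp (p * (exp \<mu> - 1))" for i
  proof -
    have "(\<Sum>y<M. exp (\<mu> * f i y)) = real (l + 1) * exp \<mu> + real (M - (l + 1))"
      unfolding f_def by (rule sum_exp_residue_window[OF assms])
    also have "\<dots> = real M * (1 + p * (exp \<mu> - 1))"
      using assms by (simp add: p_def of_nat_diff field_simps)
    also have "\<dots> \<le> real M * exp (p * (exp \<mu> - 1))"
      by (intro mult_left_mono) (auto simp: exp_ge_add_one_self)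
    finally show ?thesis .
  qed
  have "real (card {g \<in> PiE {1..n} (\<lambda>_. {..<M}). T \<le> \<mu> * real (window_count n M g J A l)})
      \<le> exp (-T) * (\<Prod>i\<in>{1..n}. \<Sum>y<M. exp (\<mu> * f i y))"
    unfolding count by (rule card_PiE_exp_tail) auto
  also have "\<dots> \<le> exp (-T) * (\<Prod>i\<in>{1..n}. real M * exp (p * (exp \<mu> - 1)))"
    by (intro mult_left_mono prod_mono conjI sum_nonneg factor) auto
  also have "\<dots> = exp (-T) * real M ^ n * exp (real n * p * (exp \<mu> - 1))"
    by (simp add: power_mult_distrib mult.assoc flip: exp_of_nat_mult)
  finally show ?thesis
    by (simp add: p_def)
qed

lemma window_count_one_sided_tail:
  fixes n M l :: nat
  assumes "l < M" "\<bar>\<mu>\<bar> \<le> 1"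
  defines "a \<equiv> real n * real (l + 1) / real M"
  shows "real (card {g \<in> PiE {1..n} (\<lambda>_. {..<M}).
                       \<bar>\<mu>\<bar> * D \<le> \<mu> * (real (window_count n M g J A l) - a)})
           \<le> real M ^ n * exp (a * \<mu>\<^sup>2 - \<bar>\<mu>\<bar> * D)"
proof -
  let ?T = "\<mu> * a + \<bar>\<mu>\<bar> * D"
  have "{g \<in> PiE {1..n} (\<lambda>_. {..<M}). \<bar>\<mu>\<bar> * D \<le> \<mu> * (real (window_count n M g J A l) - a)}
      = {g \<in> PiE {1..n} (\<lambda>_. {..<M}). ?T \<le> \<mu> * real (window_count n M g J A l)}"
    by (auto simp: algebra_simps)
  then have "real (card {g \<in> PiE {1..n} (\<lambda>_. {..<M}).
                       \<bar>\<mu>\<bar> * D \<le> \<mu> * (real (window_count n M g J A l) - a)})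
      \<le> exp (- ?T) * real M ^ n * exp (a * (exp \<mu> - 1))"
    using window_count_exp_tail[OF assms(1), of n ?T \<mu> J A] by (simp add: a_def)
  also have "\<dots> = real M ^ n * exp (a * (exp \<mu> - 1 - \<mu>) - \<bar>\<mu>\<bar> * D)"
    by (simp add: algebra_simps flip: exp_add)
  also have "\<dots> \<le> real M ^ n * exp (a * \<mu>\<^sup>2 - \<bar>\<mu>\<bar> * D)"
  proof -
    have "a * (exp \<mu> - 1 - \<mu>) \<le> a * \<mu>\<^sup>2"
      using exp_le_one_plus_x_plus_sq[OF assms(2)] by (intro mult_left_mono) (auto simp: a_def)
    then show ?thesis
      by (intro mult_left_mono) auto
  qed
  finally show ?thesis .
qed

lemma window_count_tail:
  fixes n M l :: nat
  assumes "l < M" "0 \<le> k" "k \<le> 1"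
  defines "a \<equiv> real n * real (l + 1) / real M"
  shows "real (card {g \<in> PiE {1..n} (\<lambda>_. {..<M}). D \<le> \<bar>real (window_count n M g J A l) - a\<bar>})
           \<le> 2 * real M ^ n * exp (a * k\<^sup>2 - k * D)"
proof -
  let ?\<Omega> = "PiE {1..n} (\<lambda>_. {..<M})"
  let ?X = "\<lambda>g. real (window_count n M g J A l)"
  have fin: "finite ?\<Omega>"
    by (simp add: finite_PiE)
  have "k * D \<le> k * y \<or> k * D \<le> -k * y" if "D \<le> \<bar>y\<bar>" for y
  proof (cases "0 \<le> y")
    case True
    then have "k * D \<le> k * y"
      using that assms(2) by (intro mult_left_mono) auto
    then show ?thesis ..
  next
    case False
    then have "k * D \<le> k * (-y)"
      using that assms(2) by (intro mult_left_mono) auto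
    then show ?thesis
      by simp
  qed
  then have "{g \<in> ?\<Omega>. D \<le> \<bar>?X g - a\<bar>}
      \<subseteq> {g \<in> ?\<Omega>. \<bar>k\<bar> * D \<le> k * (?X g - a)} \<union> {g \<in> ?\<Omega>. \<bar>-k\<bar> * D \<le> -k * (?X g - a)}"
    using assms(2) by auto
  then have "card {g \<in> ?\<Omega>. D \<le> \<bar>?X g - a\<bar>}
      \<le> card ({g \<in> ?\<Omega>. \<bar>k\<bar> * D \<le> k * (?X g - a)} \<union> {g \<in> ?\<Omega>. \<bar>-k\<bar> * D \<le> -k * (?X g - a)})"
    using fin by (intro card_mono) auto
  also have "\<dots> \<le> card {g \<in> ?\<Omega>. \<bar>k\<bar> * D \<le> k * (?X g - a)} + card {g \<in> ?\<Omega>. \<bar>-k\<bar> * D \<le> -k * (?X g - a)}"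
    by (rule card_Un_le)
  finally have "real (card {g \<in> ?\<Omega>. D \<le> \<bar>?X g - a\<bar>})
      \<le> real (card {g \<in> ?\<Omega>. \<bar>k\<bar> * D \<le> k * (?X g - a)})
        + real (card {g \<in> ?\<Omega>. \<bar>-k\<bar> * D \<le> -k * (?X g - a)})"
    by (simp flip: of_nat_add)
  moreover have "real (card {g \<in> ?\<Omega>. \<bar>k\<bar> * D \<le> k * (?X g - a)}) \<le> real M ^ n * exp (a * k\<^sup>2 - k * D)"
    using window_count_one_sided_tail[OF assms(1), of k n D J A] assms(2,3) by (simp add: a_def)
  moreover have "real (card {g \<in> ?\<Omega>. \<bar>-k\<bar> * D \<le> -k * (?X g - a)}) \<le> real M ^ n * exp (a * k\<^sup>2 - k * D)"
    using window_count_one_sided_tail[OF assms(1), of "-k" n D J A] assms(2,3) by (simp add: a_def)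
  ultimately show ?thesis
    by linarith
qed

lemma window_count_large_deviation:
  fixes n M l :: nat
  assumes "2 \<le> n" "l < M"
  defines "a \<equiv> real n * real (l + 1) / real M" and "L \<equiv> log 2 (real n)"
  shows "real (card {g \<in> PiE {1..n} (\<lambda>_. {..<M}).
                 16 * (sqrt (a * L) + L) \<le> \<bar>real (window_count n M g J A l) - a\<bar>})
           \<le> 2 * real M ^ n / real n ^ 8"
proof -
  have "1 \<le> L"
    using assms(1) by (simp add: L_def)
  moreover have "0 \<le> a"
    by (simp add: a_def)
  ultimately obtain k where k: "0 \<le> k" "k \<le> 1" "a * k\<^sup>2 - k * (16 * (sqrt (a * L) + L)) \<le> -8 * L"
    using exists_chernoff_parameter by blast
  have "real (card {g \<in> PiE {1..n} (\<lambda>_. {..<M}).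
                 16 * (sqrt (a * L) + L) \<le> \<bar>real (window_count n M g J A l) - a\<bar>})
      \<le> 2 * real M ^ n * exp (a * k\<^sup>2 - k * (16 * (sqrt (a * L) + L)))"
    using window_count_tail[OF assms(2) k(1,2)] by (simp add: a_def)
  also have "\<dots> \<le> 2 * real M ^ n * exp (- (real 8 * L))"
    using k(3) by (intro mult_left_mono) auto
  also have "\<dots> \<le> 2 * real M ^ n * (1 / real n ^ 8)"
    using exp_neg_log2_le[of "real n" 8] assms(1) by (intro mult_left_mono) (auto simp: L_def)
  finally show ?thesis
    by simp
qed

definition small_window_discrepancy :: "nat \<Rightarrow> (nat \<Rightarrow> nat) \<Rightarrow> bool" where
  "small_window_discrepancy n g \<longleftrightarrow>
     (\<forall>J A. \<forall>l < n\<^sup>2. \<bar>real (window_count n (n\<^sup>2) g J A l) - real (l + 1) / real n\<bar>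
        < 16 * (sqrt (real (l + 1) / real n * log 2 (real n)) + log 2 (real n)))"

lemma small_window_discrepancyD:
  assumes "small_window_discrepancy n g" "l < n\<^sup>2"
  defines "a \<equiv> real (l + 1) / real n"
  shows "\<bar>real (window_count n (n\<^sup>2) g J A l) - a\<bar> < 16 * (sqrt (a * log 2 (real n)) + log 2 (real n))"
  using assms by (simp add: small_window_discrepancy_def)

lemma exists_small_window_discrepancy:
  assumes "2 \<le> n"
  shows "\<exists>g. (\<forall>i\<in>{1..n}. g i < n\<^sup>2) \<and> small_window_discrepancy n g"
proof -
  define M where "M = n\<^sup>2"
  define \<Omega> where "\<Omega> = PiE {1..n} (\<lambda>_. {..<M})"
  define T where "T = {0..<int M} \<times> {0..<int M} \<times> {..<M}"
  define dev where "dev l = 16 * (sqrt (real (l + 1) / real n * log 2 (real n)) + log 2 (real n))" for l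
  define B where "B = (\<lambda>(J, A, l). {g \<in> \<Omega>. dev l \<le> \<bar>real (window_count n M g J A l) - real (l + 1) / real n\<bar>})"
  have n: "0 < real n"
    using assms by simp
  have mean: "real n * real (l + 1) / real M = real (l + 1) / real n" for l
    using n by (simp add: M_def power2_eq_square)
  have fin: "finite T"
    by (simp add: T_def)
  have sub: "B x \<subseteq> \<Omega>" if "x \<in> T" for x
    by (auto simp: B_def split: prod.splits)
  have bad: "real (card (B x)) \<le> 2 * real M ^ n / real n ^ 8" if "x \<in> T" for x
    using that window_count_large_deviation[OF assms, of _ M] unfolding B_def \<Omega>_def dev_def mean
    by (auto simp: T_def)
  have few: "real (card T) * (2 * real M ^ n / real n ^ 8) < real (card \<Omega>)"
  proof -
    have "real (card T) * (2 * real M ^ n / real n ^ 8) = 2 * real M ^ n / real n ^ 2"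
      using n by (simp add: T_def M_def card_cartesian_product field_simps flip: power_mult power_add)
    also have "\<dots> < real M ^ n"
    proof -
      have "(2::real) ^ 2 \<le> real n ^ 2"
        using assms by (intro power_mono) auto
      then show ?thesis
        using assms by (simp add: M_def divide_less_eq)
    qed
    finally show ?thesis
      by (simp add: \<Omega>_def card_PiE)
  qed
  obtain g where g: "g \<in> \<Omega>" "\<And>x. x \<in> T \<Longrightarrow> g \<notin> B x"
    using exists_not_in_small_union[of T B \<Omega>, OF fin sub bad few] by blast
  have "\<bar>real (window_count n M g J A l) - real (l + 1) / real n\<bar> < dev l" if "l < M" for J A l
  proof -
    have "(J mod int M, A mod int M, l) \<in> T"
      using that by (simp add: T_def)
    then have "g \<notin> B (J mod int M, A mod int M, l)"
      by (rule g(2))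
    then show ?thesis
      using g(1) by (simp add: B_def window_count_mod not_le)
  qed
  then show ?thesis
    using g(1) by (auto simp: small_window_discrepancy_def \<Omega>_def M_def dev_def PiE_iff)
qed

lemma window_count_near_mean:
  assumes "2 \<le> n" "small_window_discrepancy n g" "l < n\<^sup>2" "0 \<le> c"
    and "\<bar>real (l + 1) - real n * real n * c\<bar> \<le> 2 * real n"
  defines "L \<equiv> log 2 (real n)"
  shows "\<bar>real (window_count n (n\<^sup>2) g J A l) - real n * c\<bar>
           \<le> 2 + (16 * sqrt (real n * c * L) + 48 * L)"
proof -
  define a where "a = real (l + 1) / real n"
  have n: "2 \<le> real n" and L: "1 \<le> L"
    using assms(1) by (simp_all add: L_def)
  have "a - real n * c = (real (l + 1) - real n * real n * c) / real n"
    using n by (simp add: a_def field_simps)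
  then have "\<bar>a - real n * c\<bar> = \<bar>real (l + 1) - real n * real n * c\<bar> / real n"
    by (simp add: abs_divide)
  also have "\<dots> \<le> 2"
    using assms(5) n by (simp add: divide_le_eq)
  finally have a: "\<bar>a - real n * c\<bar> \<le> 2" .
  have "a * L \<le> (real n * c + 2) * L"
    using a L by (intro mult_right_mono) (auto simp: abs_le_iff)
  then have "sqrt (a * L) \<le> sqrt (real n * c * L) + 2 * L"
    using assms(4) L by (intro sqrt_le_sqrt_add) (auto simp: distrib_right)
  moreover have "\<bar>real (window_count n (n\<^sup>2) g J A l) - a\<bar> < 16 * (sqrt (a * L) + L)"
    using small_window_discrepancyD[OF assms(2,3)] by (simp add: a_def L_def)
  ultimately show ?thesis
    using a unfolding abs_le_iff abs_less_iff distrib_left by linarith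
qed

section \<open>Sector counts squeezed between window counts\<close>

lemma N_count_sector:
  "N_count (sector \<alpha> \<gamma>) n x = card {i \<in> {1..n}. frac (x i - \<alpha>) \<le> \<gamma>}"
proof -
  have "frac (frac y - \<alpha>) = frac (y - \<alpha>)" for y
  proof -
    have "frac y - \<alpha> = (y - \<alpha>) + of_int (- \<lfloor>y\<rfloor>)"
      by (simp add: frac_def)
    then show ?thesis
      by (simp only: frac_add_of_int_right)
  qed
  then have "frac y \<in> sector \<alpha> \<gamma> \<longleftrightarrow> frac (y - \<alpha>) \<le> \<gamma>" for y
    using frac_lt_1[of y] by (auto simp: sector_def)
  then show ?thesis
    by (simp add: N_count_def)
qed

lemma scaled_lattice_offset:
  fixes m t \<alpha> :: real
  assumes "m \<noteq> 0"
  shows "m * (real k / m + real i * t - \<alpha>)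
    = of_int (int k + int i * \<lfloor>m * t\<rfloor> - \<lfloor>m * \<alpha>\<rfloor>) + (real i * frac (m * t) - frac (m * \<alpha>))"
  using assms by (simp add: frac_def field_simps)

lemma frac_offset_bounds:
  fixes a b :: real
  assumes "i \<le> n"
  shows "-1 < real i * frac a - frac b" "real i * frac a - frac b \<le> real n"
proof -
  have "0 \<le> real i * frac a" "real i * frac a \<le> real n"
    using mult_left_le[of "frac a" "real i"] frac_lt_1[of a] assms by auto
  then show "-1 < real i * frac a - frac b" "real i * frac a - frac b \<le> real n"
    using frac_lt_1[of b] frac_ge_0[of b] by linarith+
qed

(* Shifting A by n, resp. by -1, puts the integer point just to the right, resp. left, of the
   scaled point, at distance less than n + 1. *)
lemma residue_window_of_sector_point:
  fixes t \<alpha> \<gamma> :: real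
  assumes "0 < M" "i \<le> n" "frac (real k / real M + real i * t - \<alpha>) \<le> \<gamma>"
  shows "(int k + int i * \<lfloor>real M * t\<rfloor> - (\<lfloor>real M * \<alpha>\<rfloor> - int n)) mod int M
           \<le> \<lfloor>real M * \<gamma>\<rfloor> + int n + 1"
proof -
  define m where "m = real M"
  define x where "x = real k / m + real i * t - \<alpha>"
  define z where "z = int k + int i * \<lfloor>m * t\<rfloor> - (\<lfloor>m * \<alpha>\<rfloor> - int n)"
  define \<delta> where "\<delta> = real i * frac (m * t) - frac (m * \<alpha>)"
  have m: "0 < m"
    using assms(1) by (simp add: m_def)
  have \<delta>: "-1 < \<delta>" "\<delta> \<le> real n"
    using frac_offset_bounds[OF assms(2)] by (simp_all add: \<delta>_def)
  define w where "w = (real n - \<delta>) / m"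
  have "m * x = of_int z - real n + \<delta>"
    using scaled_lattice_offset[of m k i t \<alpha>] m by (simp add: x_def z_def \<delta>_def)
  then have "of_int z / m = x + w"
    using m by (simp add: w_def field_simps)
  moreover have "0 \<le> w"
    using \<delta> m by (simp add: w_def)
  ultimately have "frac (of_int z / m) \<le> frac x + w"
    by (simp add: frac_add_nonneg_le)
  then have "of_int (z mod int M) / m \<le> \<gamma> + w"
    using assms frac_of_int_div[of M z] by (simp add: m_def x_def)
  then have "of_int (z mod int M) \<le> m * \<gamma> + real n - \<delta>"
    using m by (simp add: w_def field_simps)
  then have "of_int (z mod int M - int n - 1) \<le> m * \<gamma>"
    using \<delta> by simp
  then have "z mod int M - int n - 1 \<le> \<lfloor>m * \<gamma>\<rfloor>"
    by (simp only: le_floor_iff)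
  then show ?thesis
    by (simp add: z_def m_def)
qed

lemma sector_point_of_residue_window:
  fixes t \<alpha> \<gamma> :: real
  assumes "0 < M" "i \<le> n"
    and "(int k + int i * \<lfloor>real M * t\<rfloor> - (\<lfloor>real M * \<alpha>\<rfloor> + 1)) mod int M
           \<le> \<lfloor>real M * \<gamma>\<rfloor> - int n - 1"
  shows "frac (real k / real M + real i * t - \<alpha>) \<le> \<gamma>"
proof -
  define m where "m = real M"
  define x where "x = real k / m + real i * t - \<alpha>"
  define z where "z = int k + int i * \<lfloor>m * t\<rfloor> - (\<lfloor>m * \<alpha>\<rfloor> + 1)"
  define \<delta> where "\<delta> = real i * frac (m * t) - frac (m * \<alpha>)"
  have m: "0 < m"
    using assms(1) by (simp add: m_def)
  have \<delta>: "-1 < \<delta>" "\<delta> \<le> real n"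
    using frac_offset_bounds[OF assms(2)] by (simp_all add: \<delta>_def)
  define w where "w = (1 + \<delta>) / m"
  have "m * x = of_int z + 1 + \<delta>"
    using scaled_lattice_offset[of m k i t \<alpha>] m by (simp add: x_def z_def \<delta>_def)
  then have "x = of_int z / m + w"
    using m by (simp add: w_def field_simps)
  moreover have "0 \<le> w"
    using \<delta> m by (simp add: w_def)
  ultimately have "frac x \<le> frac (of_int z / m) + w"
    by (simp add: frac_add_nonneg_le)
  also have "frac (of_int z / m) = of_int (z mod int M) / m"
    using assms(1) frac_of_int_div[of M z] by (simp add: m_def)
  also have "of_int (z mod int M) / m + w \<le> (of_int \<lfloor>m * \<gamma>\<rfloor> - real n - 1 + 1 + \<delta>) / m"
    using assms(3) m by (simp add: w_def z_def m_def add_divide_distrib [symmetric] divide_right_mono)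
  also have "\<dots> \<le> \<gamma>"
    using \<delta> m by (simp add: field_simps) linarith
  finally show ?thesis
    by (simp add: x_def m_def)
qed

lemma sector_count_upper:
  fixes t \<alpha> \<gamma> :: real
  assumes "2 \<le> n" "small_window_discrepancy n g" "0 \<le> \<gamma>"
  defines "L \<equiv> log 2 (real n)"
  shows "real (N_count (sector \<alpha> \<gamma>) n (\<lambda>i. real (g i) / real (n\<^sup>2) + real i * t))
           \<le> real n * \<gamma> + 2 + (16 * sqrt (real n * \<gamma> * L) + 48 * L)"
proof -
  define m where "m = real (n\<^sup>2)"
  define S where "S = {i \<in> {1..n}. frac (real (g i) / m + real i * t - \<alpha>) \<le> \<gamma>}"
  define l where "l = \<lfloor>m * \<gamma>\<rfloor> + int n + 1"
  have n: "2 \<le> real n" and m: "m = real n * real n"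
    using assms(1) by (simp_all add: m_def power2_eq_square)
  have N: "N_count (sector \<alpha> \<gamma>) n (\<lambda>i. real (g i) / real (n\<^sup>2) + real i * t) = card S"
    by (simp add: N_count_sector S_def m_def)
  have "0 \<le> 16 * sqrt (real n * \<gamma> * L) + 48 * L"
    using assms(1,3) by (simp add: L_def)
  moreover have "real (card S) \<le> real n * \<gamma> + 2 + (16 * sqrt (real n * \<gamma> * L) + 48 * L)"
    if "l < int (n\<^sup>2)"
  proof -
    define J A where "J = \<lfloor>m * t\<rfloor>" and "A = \<lfloor>m * \<alpha>\<rfloor> - int n"
    have "S \<subseteq> {i \<in> {1..n}. (int (g i) + int i * J - A) mod int (n\<^sup>2) \<le> int (nat l)}"
      using residue_window_of_sector_point[of "n\<^sup>2" _ n] assms(1,3)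
      by (auto simp: S_def l_def m_def J_def A_def)
    then have "real (card S) \<le> real (window_count n (n\<^sup>2) g J A (nat l))"
      unfolding window_count_def by (intro of_nat_mono card_mono) auto
    moreover have "nat l < n\<^sup>2"
      using that assms(3) by (simp add: nat_less_iff l_def m_def)
    moreover have "real (nat l + 1) = of_int \<lfloor>m * \<gamma>\<rfloor> + real n + 2"
      using assms(3) by (simp add: l_def m_def)
    then have "\<bar>real (nat l + 1) - real n * real n * \<gamma>\<bar> \<le> 2 * real n"
      using n unfolding m by linarith
    ultimately show ?thesis
      using window_count_near_mean[OF assms(1,2) _ assms(3), of "nat l" J A]
      unfolding L_def abs_le_iff by linarith
  qed
  moreover have "real (card S) \<le> real n * \<gamma> + 2" if "\<not> l < int (n\<^sup>2)"
  proof -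
    have "int (n\<^sup>2) - int n - 1 \<le> \<lfloor>m * \<gamma>\<rfloor>"
      using that by (simp add: l_def)
    then have "real n * real n - real n - 1 \<le> real n * (real n * \<gamma>)"
      by (simp add: le_floor_iff m power2_eq_square)
    then have "real n * (real n - real n * \<gamma> - 2) \<le> 0"
      using n by (simp add: algebra_simps)
    then have "real n \<le> real n * \<gamma> + 2"
      using n by (simp add: mult_le_0_iff)
    moreover have "card S \<le> card {1..n}"
      by (rule card_mono) (auto simp: S_def)
    ultimately show ?thesis
      by simp
  qed
  ultimately show ?thesis
    unfolding N by fastforce
qed

lemma sector_count_lower:
  fixes t \<alpha> \<gamma> :: real
  assumes "2 \<le> n" "small_window_discrepancy n g" "0 \<le> \<gamma>" "\<gamma> \<le> 1"
  defines "L \<equiv> log 2 (real n)"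
  shows "real n * \<gamma> - 2 - (16 * sqrt (real n * \<gamma> * L) + 48 * L)
           \<le> real (N_count (sector \<alpha> \<gamma>) n (\<lambda>i. real (g i) / real (n\<^sup>2) + real i * t))"
proof -
  define m where "m = real (n\<^sup>2)"
  define S where "S = {i \<in> {1..n}. frac (real (g i) / m + real i * t - \<alpha>) \<le> \<gamma>}"
  define l where "l = \<lfloor>m * \<gamma>\<rfloor> - int n - 1"
  have n: "2 \<le> real n" and m: "m = real n * real n"
    using assms(1) by (simp_all add: m_def power2_eq_square)
  have N: "N_count (sector \<alpha> \<gamma>) n (\<lambda>i. real (g i) / real (n\<^sup>2) + real i * t) = card S"
    by (simp add: N_count_sector S_def m_def)
  have "0 \<le> 16 * sqrt (real n * \<gamma> * L) + 48 * L"
    using assms(1,3) by (simp add: L_def)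
  moreover have "real n * \<gamma> - 2 - (16 * sqrt (real n * \<gamma> * L) + 48 * L) \<le> real (card S)"
    if "0 \<le> l"
  proof -
    define J A where "J = \<lfloor>m * t\<rfloor>" and "A = \<lfloor>m * \<alpha>\<rfloor> + 1"
    have "{i \<in> {1..n}. (int (g i) + int i * J - A) mod int (n\<^sup>2) \<le> int (nat l)} \<subseteq> S"
      using sector_point_of_residue_window[of "n\<^sup>2" _ n] assms(1) that
      by (auto simp: S_def l_def m_def J_def A_def)
    then have "real (window_count n (n\<^sup>2) g J A (nat l)) \<le> real (card S)"
      unfolding window_count_def by (intro of_nat_mono card_mono) (auto simp: S_def)
    moreover have "nat l < n\<^sup>2"
    proof -
      have "\<lfloor>m * \<gamma>\<rfloor> \<le> \<lfloor>m\<rfloor>"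
        using assms(4) n by (intro floor_mono) (simp add: m)
      also have "\<lfloor>m\<rfloor> = int (n\<^sup>2)"
        unfolding m_def by (rule floor_of_nat)
      finally show ?thesis
        using that by (simp add: nat_less_iff l_def)
    qed
    moreover have "real (nat l + 1) = of_int \<lfloor>m * \<gamma>\<rfloor> - real n"
      using that by (simp add: l_def)
    then have "\<bar>real (nat l + 1) - real n * real n * \<gamma>\<bar> \<le> 2 * real n"
      using n unfolding m by linarith
    ultimately show ?thesis
      using window_count_near_mean[OF assms(1,2) _ assms(3), of "nat l" J A]
      unfolding L_def abs_le_iff by linarith
  qed
  moreover have "real n * \<gamma> < 2" if "l < 0"
  proof -
    have "\<lfloor>m * \<gamma>\<rfloor> < int n + 1"
      using that by (simp add: l_def)
    then have "real n * (real n * \<gamma>) < real n + 1"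
      using floor_less_iff[of "m * \<gamma>" "int n + 1"] by (simp add: m)
    then have "real n * (real n * \<gamma> - 2) < 0"
      using n unfolding right_diff_distrib by linarith
    then show ?thesis
      using n by (simp add: mult_less_0_iff)
  qed
  ultimately show ?thesis
    unfolding N by fastforce
qed

lemma sector_count_deviation:
  fixes t \<alpha> \<gamma> :: real
  assumes "2 \<le> n" "small_window_discrepancy n g" "0 \<le> \<gamma>" "\<gamma> \<le> 1"
  shows "\<bar>real (N_count (sector \<alpha> \<gamma>) n (\<lambda>i. real (g i) / real (n\<^sup>2) + real i * t)) - \<gamma> * real n\<bar>
           \<le> 50 * (sqrt (real n * \<gamma> * log 2 (real n)) + log 2 (real n))"
proof -
  have "0 \<le> sqrt (real n * \<gamma> * log 2 (real n))" "1 \<le> log 2 (real n)" "\<gamma> * real n = real n * \<gamma>"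
    using assms by simp_all
  then show ?thesis
    using sector_count_upper[OF assms(1-3), of \<alpha> t] sector_count_lower[OF assms, of \<alpha> t]
    unfolding abs_le_iff distrib_left by linarith
qed

section \<open>Bias\<close>

lemma interval_subset_sector:
  fixes a b y :: real
  assumes "0 \<le> a" "a \<le> b" "b \<le> 1" "0 \<le> y" "y < 1"
  shows "y \<in> {a..b} \<Longrightarrow> y \<in> sector a (b - a)"
    and "y \<in> sector a (b - a) \<Longrightarrow> y \<in> {a..b} \<or> y \<in> sector 0 0"
proof -
  show "y \<in> sector a (b - a)" if "y \<in> {a..b}"
    using that assms by (simp add: sector_def frac_eq)
  show "y \<in> {a..b} \<or> y \<in> sector 0 0" if "y \<in> sector a (b - a)"
  proof (cases "a \<le> y")
    case True
    then have "frac (y - a) = y - a"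
      using assms by (simp add: frac_eq)
    then show ?thesis
      using that True by (simp add: sector_def)
  next
    case False
    then have "frac (y - a) = y - a + 1"
      using assms frac_1_eq[of "y - a"] by (simp add: frac_eq)
    then have "y = 0"
      using that assms by (simp add: sector_def)
    then show ?thesis
      by (simp add: sector_def)
  qed
qed

lemma N_count_sector_interval:
  fixes a b :: real
  assumes "0 \<le> a" "a \<le> b" "b \<le> 1"
  shows "card {i \<in> {1..n}. frac (x i) \<in> {a..b}} \<le> N_count (sector a (b - a)) n x"
    and "N_count (sector a (b - a)) n x \<le> card {i \<in> {1..n}. frac (x i) \<in> {a..b}} + N_count (sector 0 0) n x"
proof -
  show "card {i \<in> {1..n}. frac (x i) \<in> {a..b}} \<le> N_count (sector a (b - a)) n x"
    unfolding N_count_def using interval_subset_sector(1)[OF assms frac_ge_0 frac_lt_1]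
    by (intro card_mono) auto
  have "N_count (sector a (b - a)) n x
      \<le> card ({i \<in> {1..n}. frac (x i) \<in> {a..b}} \<union> {i \<in> {1..n}. frac (x i) \<in> sector 0 0})"
    unfolding N_count_def using interval_subset_sector(2)[OF assms frac_ge_0 frac_lt_1]
    by (intro card_mono) auto
  also have "\<dots> \<le> card {i \<in> {1..n}. frac (x i) \<in> {a..b}} + N_count (sector 0 0) n x"
    unfolding N_count_def by (rule card_Un_le)
  finally show "N_count (sector a (b - a)) n x
      \<le> card {i \<in> {1..n}. frac (x i) \<in> {a..b}} + N_count (sector 0 0) n x" .
qed

lemma bias_le_of_sector_discrepancy:
  assumes "2 \<le> n" "0 \<le> C"
    and sector: "\<And>\<alpha> \<gamma>. 0 \<le> \<gamma> \<Longrightarrow> \<gamma> \<le> 1 \<Longrightarrow>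
       \<bar>real (N_count (sector \<alpha> \<gamma>) n x) - \<gamma> * real n\<bar>
         \<le> C * (sqrt (real n * \<gamma> * log 2 (real n)) + log 2 (real n))"
  shows "bias n x \<le> 3 * C * sqrt (real n * log 2 (real n))"
  unfolding bias_def
proof (rule cSup_least)
  define L where "L = log 2 (real n)"
  let ?I = "\<lambda>a b. card {i \<in> {1..n}. frac (x i) \<in> {a..b}}"
  show "{\<bar>real (?I a b) - real n * (b - a)\<bar> | a b. 0 \<le> a \<and> a \<le> b \<and> b \<le> 1} \<noteq> {}"
    by (auto intro!: exI[of _ 0])
  fix v
  assume "v \<in> {\<bar>real (?I a b) - real n * (b - a)\<bar> | a b. 0 \<le> a \<and> a \<le> b \<and> b \<le> 1}"
  then obtain a b where ab: "0 \<le> a" "a \<le> b" "b \<le> 1"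
    and v: "v = \<bar>real (?I a b) - real n * (b - a)\<bar>"
    by blast
  have L: "1 \<le> L" "L \<le> sqrt (real n * L)"
  proof -
    show "1 \<le> L"
      using assms(1) by (simp add: L_def)
    have "L < real n"
      using log2_of_power_less[of n n] assms(1) by (simp add: L_def)
    then show "L \<le> sqrt (real n * L)"
      using \<open>1 \<le> L\<close> by (intro real_le_rsqrt) (simp add: power2_eq_square)
  qed
  have "real n * (b - a) * L \<le> real n * L"
    using ab L by (intro mult_right_mono mult_right_le_one_le) auto
  then have "C * sqrt (real n * (b - a) * L) \<le> C * sqrt (real n * L)"
    using assms(2) by (intro mult_left_mono) auto
  moreover have "\<bar>real (N_count (sector a (b - a)) n x) - (b - a) * real n\<bar>
      \<le> C * sqrt (real n * (b - a) * L) + C * L"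
    using sector[of "b - a" a] ab by (simp add: L_def distrib_left)
  moreover have "real (N_count (sector 0 0) n x) \<le> C * L"
    using sector[of 0 0] by (simp add: L_def)
  moreover have "real (?I a b) \<le> real (N_count (sector a (b - a)) n x)"
    "real (N_count (sector a (b - a)) n x) \<le> real (?I a b) + real (N_count (sector 0 0) n x)"
    using N_count_sector_interval[OF ab, of n x] by (simp_all flip: of_nat_add)
  moreover have "C * L \<le> C * sqrt (real n * L)"
    using L assms(2) by (intro mult_left_mono) auto
  moreover have "(b - a) * real n = real n * (b - a)"
    by simp
  ultimately have "v \<le> 3 * (C * sqrt (real n * L))"
    unfolding v abs_le_iff by linarith
  then show "v \<le> 3 * C * sqrt (real n * log 2 (real n))"
    by (simp add: L_def)
qed

lemma exists_equidistributed_offsets: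
  assumes n: "2 \<le> n"
  shows "\<exists>s :: nat \<Rightarrow> real. (\<forall>i \<in> {1..n}. 0 \<le> s i \<and> s i < 1) \<and>
    (\<forall>t \<gamma> \<alpha>. 0 \<le> \<gamma> \<and> \<gamma> \<le> 1 \<longrightarrow>
       \<bar>real (N_count (sector \<alpha> \<gamma>) n (\<lambda>i. s i + real i * t)) - \<gamma> * real n\<bar>
         \<le> 50 * (sqrt (real n * \<gamma> * log 2 (real n)) + log 2 (real n))) \<and>
    (\<forall>t. bias n (\<lambda>i. s i + real i * t) \<le> 150 * sqrt (real n * log 2 (real n)))"
proof -
  obtain g where g: "\<forall>i\<in>{1..n}. g i < n\<^sup>2" "small_window_discrepancy n g"
    using exists_small_window_discrepancy[OF n] by blast
  define s where "s i = real (g i) / real (n\<^sup>2)" for i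
  have sector: "\<bar>real (N_count (sector \<alpha> \<gamma>) n (\<lambda>i. s i + real i * t)) - \<gamma> * real n\<bar>
      \<le> 50 * (sqrt (real n * \<gamma> * log 2 (real n)) + log 2 (real n))"
    if "0 \<le> \<gamma>" "\<gamma> \<le> 1" for t \<gamma> \<alpha>
    unfolding s_def using sector_count_deviation[OF n g(2) that] .
  show ?thesis
  proof (intro exI[of _ s] conjI ballI allI impI)
    show "0 \<le> s i" for i
      by (simp add: s_def)
    show "s i < 1" if "i \<in> {1..n}" for i
      using g(1) that by (simp add: s_def flip: of_nat_power)
    show "bias n (\<lambda>i. s i + real i * t) \<le> 150 * sqrt (real n * log 2 (real n))" for t
      using bias_le_of_sector_discrepancy[OF n _ sector] by simp
  qed (use sector in blast)
qed

theorem theorem4p1: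
  shows "\<exists>C > 0. \<exists>C' > 0. \<forall>n::nat. n \<ge> 2 \<longrightarrow>
    (\<exists>s :: nat \<Rightarrow> real. (\<forall>i \<in> {1..n}. 0 \<le> s i \<and> s i < 1) \<and>
      (\<forall>t::real. \<forall>\<gamma>::real. \<forall>\<alpha>::real. 0 \<le> \<gamma> \<and> \<gamma> \<le> 1 \<longrightarrow>
         \<bar>real (N_count (sector \<alpha> \<gamma>) n (\<lambda>i. s i + real i * t)) - \<gamma> * real n\<bar>
           \<le> C * (sqrt (real n * \<gamma> * log 2 (real n)) + log 2 (real n))) \<and>
      (\<forall>t::real. bias n (\<lambda>i. s i + real i * t) \<le> C' * sqrt (real n * log 2 (real n))))"
  by (rule exI[of _ 50], rule conjI, simp, rule exI[of _ 150], rule conjI, simp)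
    (use exists_equidistributed_offsets in blast)

end
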